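(* Let $(G,+)$ be a group. Let $ICE(G)$ be the set of image-commuting pairs $(\varepsilon,\eta)$ of endomorphisms of $(G,+)$, and let $INR(G)$ be the set of interchange near rings $(G,+,\bullet)$ whose underlying group is $(G,+)$ (i.e. the set of binary operations $\bullet$ on $G$ satisfying the interchange law). Then the map $\Psi: ICE(G)\to INR(G)$, $\Psi(\varepsilon,\eta) = (G,+,\bullet_{(\varepsilon,\eta)})$ where $x\bullet_{(\varepsilon,\eta)} y = \varepsilon(x)+\eta(y)$, is a bijection.
   Context: An interchange near ring is a triple $(G,+,\bullet)$ where $(G,+)$ is a group (written additively, not necessarily abelian) and $\bullet$ is a binary operation on $G$ satisfying the interchange law $(w+x)\bullet(y+z) = (w\bullet y)+(x\bullet z)$ for all $w,x,y,z\in G$. A pair $(\varepsilon,\eta)$ of endomorphisms of $(G,+)$ is image-commuting if $\varepsilon(x)+\eta(y) = \eta(y)+\varepsilon(x)$ for all $x,y\in G$. *)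

theory Defs
  imports Main
begin

definition endo :: "('a::group_add \<Rightarrow> 'a) \<Rightarrow> bool" where
  "endo f \<longleftrightarrow> (\<forall>x y. f (x + y) = f x + f y)"

definition image_commuting :: "('a::group_add \<Rightarrow> 'a) \<Rightarrow> ('a \<Rightarrow> 'a) \<Rightarrow> bool" where
  "image_commuting e h \<longleftrightarrow> (\<forall>x y. e x + h y = h y + e x)"

definition ICE :: "(('a::group_add \<Rightarrow> 'a) \<times> ('a \<Rightarrow> 'a)) set" where
  "ICE = {(e, h). endo e \<and> endo h \<and> image_commuting e h}"

definition interchange :: "('a::group_add \<Rightarrow> 'a \<Rightarrow> 'a) \<Rightarrow> bool" where
  "interchange m \<longleftrightarrow> (\<forall>w x y z. m (w + x) (y + z) = m w y + m x z)"

text \<open>INR(G): interchange near rings with underlying group (G,+), identified with their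
multiplication.\<close>
definition INR :: "('a::group_add \<Rightarrow> 'a \<Rightarrow> 'a) set" where
  "INR = {m. interchange m}"

definition Psi :: "('a::group_add \<Rightarrow> 'a) \<times> ('a \<Rightarrow> 'a) \<Rightarrow> ('a \<Rightarrow> 'a \<Rightarrow> 'a)" where
  "Psi p = (\<lambda>x y. fst p x + snd p y)"

end

theory Submission
  imports Defs
begin

(* Every image-commuting pair (e, h) of endomorphisms yields the
   interchange operation  x * y = e x + h y  (Psi).  Conversely, an interchange
   operation m is determined by its two "components"  x \<mapsto> m x 0  and
   y \<mapsto> m 0 y: the interchange law applied to  (x + 0) * (0 + y)  gives
   m x y = m x 0 + m 0 y, applied to  (0 + x) * (y + 0)  gives
   m x y = m 0 y + m x 0, so the components commute, and they are endomorphisms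
   by the interchange law with zeros in the other slot.  Since endomorphisms
   fix 0, taking components is a two-sided inverse of Psi between ICE and INR. *)

text \<open>The two components of a binary operation; this is the inverse of Psi.\<close>
definition components :: "('a::group_add \<Rightarrow> 'a \<Rightarrow> 'a) \<Rightarrow> ('a \<Rightarrow> 'a) \<times> ('a \<Rightarrow> 'a)" where
  "components m = (\<lambda>x. m x 0, \<lambda>y. m 0 y)"

text \<open>An endomorphism of a (not necessarily abelian) group preserves 0; needed to
  recover e and h from  e x + h y  by setting one argument to 0.\<close>
lemma endo_zero:
  assumes "endo f"
  shows "f 0 = (0::'a::group_add)"
proof -
  have "f 0 + f 0 = f (0 + 0)"
    using assms unfolding endo_def by metis
  then have "f 0 + f 0 = f 0 + 0" by simp
  then show ?thesis by (rule add_left_imp_eq)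
qed

text \<open>Psi sends an image-commuting pair of endomorphisms to an interchange operation:
  the middle terms  e x  and  h y  may be swapped.\<close>
lemma Psi_interchange:
  assumes "endo e" and "endo h" and "image_commuting e h"
  shows "interchange (Psi (e, h))"
  unfolding interchange_def Psi_def fst_conv snd_conv
proof (intro allI)
  fix w x y z :: 'a
  have "e (w + x) + h (y + z) = e w + (e x + h y) + h z"
    using assms(1,2) unfolding endo_def by (simp add: add.assoc)
  also have "\<dots> = e w + (h y + e x) + h z"
    using assms(3) unfolding image_commuting_def by simp
  finally show "e (w + x) + h (y + z) = (e w + h y) + (e x + h z)"
    by (simp add: add.assoc)
qed

lemma interchange_split:
  assumes "interchange m"
  shows "m x y = m x 0 + m 0 y" and "m x y = m 0 y + m x 0"
  using assms[unfolded interchange_def, rule_format, of x 0 0 y]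
        assms[unfolded interchange_def, rule_format, of 0 x y 0]
  by simp_all

lemma components_ICE:
  assumes "interchange m"
  shows "components m \<in> ICE"
proof -
  have I: "\<And>w x y z. m (w + x) (y + z) = m w y + m x z"
    using assms unfolding interchange_def by blast
  have "endo (\<lambda>x. m x 0)"
    unfolding endo_def using I[of _ _ 0 0] by simp
  moreover have "endo (\<lambda>y. m 0 y)"
    unfolding endo_def using I[of 0 0] by simp
  moreover have "image_commuting (\<lambda>x. m x 0) (\<lambda>y. m 0 y)"
  proof (unfold image_commuting_def, intro allI)
    fix x y
    show "m x 0 + m 0 y = m 0 y + m x 0"
      using interchange_split[OF assms, of x y] by (rule trans[OF sym])
  qed
  ultimately show ?thesis
    by (simp add: ICE_def components_def)
qed

lemma components_Psi:
  assumes "endo e" and "endo h"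
  shows "components (Psi (e, h)) = (e, h)"
  using endo_zero[OF assms(1)] endo_zero[OF assms(2)]
  by (simp add: components_def Psi_def)

lemma Psi_components:
  assumes "interchange m"
  shows "Psi (components m) = m"
proof (intro ext)
  fix x y
  show "Psi (components m) x y = m x y"
    unfolding components_def Psi_def fst_conv snd_conv
    by (rule interchange_split(1)[OF assms, symmetric])
qed

theorem theorem3p4:
  shows "bij_betw (Psi :: ('a::group_add \<Rightarrow> 'a) \<times> ('a \<Rightarrow> 'a) \<Rightarrow> _) ICE INR"
proof (rule bij_betw_byWitness[where f' = components])
  show "\<forall>p\<in>ICE. components (Psi p) = (p :: ('a \<Rightarrow> 'a) \<times> ('a \<Rightarrow> 'a))"
    by (auto simp: ICE_def components_Psi)
  show "\<forall>m\<in>INR. Psi (components m) = (m :: 'a \<Rightarrow> 'a \<Rightarrow> 'a)"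
    by (simp add: INR_def Psi_components)
  show "Psi ` ICE \<subseteq> (INR :: ('a \<Rightarrow> 'a \<Rightarrow> 'a) set)"
    by (auto simp: ICE_def INR_def Psi_interchange)
  show "components ` INR \<subseteq> (ICE :: (('a \<Rightarrow> 'a) \<times> ('a \<Rightarrow> 'a)) set)"
    by (auto simp: INR_def components_ICE)
qed

end
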